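(* Let $\Pi$ be a finite, satisfiable set of linear constraints over the variables $x_1,\dots,x_D$ (each of the form $\sum_k w_k x_k + b \unrhd 0$ with $\unrhd\in\{\ge,>\}$), and let $\mathrm{CL}$ be the constraint layer built from $\Pi$ and the variable ordering $x_1,\dots,x_D$ as described in the context. Then for every sample $\tilde x\in\mathbb{R}^D$ (and every admissible choice of the $\epsilon$ values), $\mathrm{CL}(\tilde x)$ satisfies every constraint in $\Pi$. Consequently, for any generative model $m$ producing samples in $\mathbb{R}^D$, the model C-$m$ obtained by applying $\mathrm{CL}$ to every output of $m$ is compliant with $\Pi$, i.e. all samples it generates satisfy $\Pi$.
   Context: A constraint is a linear inequality $\phi:\ \sum_{k=1}^D w_k x_k + b \unrhd 0$ with $w_k,b\in\mathbb{R}$ and $\unrhd\in\{\ge,>\}$; it is strict if $\unrhd$ is $>$. A point $\tilde x\in\mathbb{R}^D$ satisfies $\phi$ if $\sum_k w_k\tilde x_k+b\unrhd 0$, and satisfies a set $\Pi$ if it satisfies every member; $\Pi$ is satisfiable if some point satisfies it. Variable $x_j$ appears positively (resp. negatively) in $\phi$ if $w_j>0$ (resp. $w_j<0$). For a set $\Gamma$ of constraints, $\Gamma^+_j$ (resp. $\Gamma^-_j$) is the subset in which $x_j$ appears positively (resp. negatively). Reduction: for $\phi^1=\sum_k w^1_kx_k+b^1\unrhd^1 0\in\Gamma^-_j$ and $\phi^2=\sum_k w^2_kx_k+b^2\unrhd^2 0\in\Gamma^+_j$, $red_j(\phi^1,\phi^2)$ is $\sum_{k\ne j}(w^1_k|w^2_j|+w^2_k|w^1_j|)x_k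 + b^1|w^2_j|+b^2|w^1_j| \unrhd 0$, where $\unrhd$ is $\ge$ if both $\unrhd^1,\unrhd^2$ are $\ge$, and $>$ otherwise. Sets $\Pi_i$: $\Pi_D=\Pi$, and for $i<D$, with $j=i+1$, $\Pi_i=(\Pi_j\setminus(\Pi^-_j\cup\Pi^+_j))\cup\{red_j(\phi^1,\phi^2):\phi^1\in\Pi^-_j,\phi^2\in\Pi^+_j\}$, where $\Pi^\pm_j$ means $(\Pi_j)^\pm_j$. (Thus only $x_1,\dots,x_i$ occur in $\Pi_i$; we write $\Pi_i^\pm$ for $(\Pi_i)^\pm_i$.) For $\phi=\sum_kw_kx_k+b\unrhd0$ with $w_i\neq0$, let $\varepsilon^\phi_i=-\sum_{k\ne i}(w_k/w_i)x_k-b/w_i$; for $\phi\in\Pi_i$ it depends only on $x_1,\dots,x_{i-1}$, and $\phi\in\Pi_i^+$ is equivalent to $x_i-\varepsilon_i^\phi\unrhd0$, $\phi\in\Pi_i^-$ to $\varepsilon_i^\phi - x_i\unrhd 0$. Constraint layer: given $\tilde x\in\mathbb{R}^D$, $\mathrm{CL}(\tilde x)\in\mathbb{R}^D$ is computed coordinatewise for $i=1,\dots,D$. Let $\varepsilon^\phi_i(\mathrm{CL}(\tilde x))$ denote $\varepsilon^\phi_i$ evaluated at the already computed values $\mathrm{CL}(\tilde x)_1,\dots,\mathrm{CL}(\tilde x)_{i-1}$, and set $ub_i=\min\{\varepsilon^\phi_i(\mathrm{CL}(\tilde x)):\phi\in\Pi_i^-\}$, $lb_i=\max\{\varepsilon^\phi_i(\mathrm{CL}(\tilde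 x)):\phi\in\Pi_i^+\}$ (with $\min\emptyset=+\infty$, $\max\emptyset=-\infty$). Then $\mathrm{CL}(\tilde x)_i=\min^i(\max^i(\tilde x_i,lb_i),ub_i)$, where $\max^i(a,lb_i)$ equals $v=\max(a,lb_i)$ unless some strict $\phi\in\Pi_i^+$ has $v=\varepsilon^\phi_i(\mathrm{CL}(\tilde x))$, in which case it equals $v+\epsilon$ for a chosen $\epsilon>0$ small enough that $lb_i+\epsilon< ub_i$; symmetrically $\min^i(a,ub_i)$ equals $u=\min(a,ub_i)$ unless some strict $\phi\in\Pi_i^-$ has $u=\varepsilon^\phi_i(\mathrm{CL}(\tilde x))$, in which case it equals $u-\epsilon$ for a chosen $\epsilon>0$ small enough that $ub_i-\epsilon>lb_i$. The chosen positive numbers are called the $\epsilon$ values used to compute $\mathrm{CL}(\tilde x)$. *)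

theory Defs
  imports Complex_Main "HOL-Library.Extended_Real"
begin

(* A linear constraint  sum_k w_k x_k + b |> 0  over variables x_1..x_D.
   Points of R^D are functions nat => real; only coordinates 1..D matter. *)
record lcons =
  wt :: "nat \<Rightarrow> real"
  bias :: real
  strict :: bool

definition lval :: "nat \<Rightarrow> lcons \<Rightarrow> (nat \<Rightarrow> real) \<Rightarrow> real" where
  "lval D \<phi> x = (\<Sum>k=1..D. wt \<phi> k * x k) + bias \<phi>"

definition sat :: "nat \<Rightarrow> (nat \<Rightarrow> real) \<Rightarrow> lcons \<Rightarrow> bool" where
  "sat D x \<phi> \<longleftrightarrow> (if strict \<phi> then lval D \<phi> x > 0 else lval D \<phi> x \<ge> 0)"

definition sat_set :: "nat \<Rightarrow> (nat \<Rightarrow> real) \<Rightarrow> lcons set \<Rightarrow> bool" where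
  "sat_set D x \<Pi> \<longleftrightarrow> (\<forall>\<phi>\<in>\<Pi>. sat D x \<phi>)"

definition satisfiable :: "nat \<Rightarrow> lcons set \<Rightarrow> bool" where
  "satisfiable D \<Pi> \<longleftrightarrow> (\<exists>x. sat_set D x \<Pi>)"

definition posset :: "nat \<Rightarrow> lcons set \<Rightarrow> lcons set" where
  "posset j \<Gamma> = {\<phi>\<in>\<Gamma>. wt \<phi> j > 0}"

definition negset :: "nat \<Rightarrow> lcons set \<Rightarrow> lcons set" where
  "negset j \<Gamma> = {\<phi>\<in>\<Gamma>. wt \<phi> j < 0}"

(* red_j(phi1, phi2), phi1 in Gamma^-_j, phi2 in Gamma^+_j *)
definition red :: "nat \<Rightarrow> lcons \<Rightarrow> lcons \<Rightarrow> lcons" where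
  "red j \<phi>1 \<phi>2 =
     \<lparr> wt = (\<lambda>k. if k = j then 0
                   else wt \<phi>1 k * \<bar>wt \<phi>2 j\<bar> + wt \<phi>2 k * \<bar>wt \<phi>1 j\<bar>),
       bias = bias \<phi>1 * \<bar>wt \<phi>2 j\<bar> + bias \<phi>2 * \<bar>wt \<phi>1 j\<bar>,
       strict = (strict \<phi>1 \<or> strict \<phi>2) \<rparr>"

definition elim :: "nat \<Rightarrow> lcons set \<Rightarrow> lcons set" where
  "elim j \<Gamma> = (\<Gamma> - (negset j \<Gamma> \<union> posset j \<Gamma>))
      \<union> {red j \<phi>1 \<phi>2 | \<phi>1 \<phi>2. \<phi>1 \<in> negset j \<Gamma> \<and> \<phi>2 \<in> posset j \<Gamma>}"

(* elimsteps D Pi n = Pi_{D-n} *)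
fun elimsteps :: "nat \<Rightarrow> lcons set \<Rightarrow> nat \<Rightarrow> lcons set" where
  "elimsteps D \<Pi> 0 = \<Pi>"
| "elimsteps D \<Pi> (Suc n) = elim (D - n) (elimsteps D \<Pi> n)"

definition PiSet :: "nat \<Rightarrow> lcons set \<Rightarrow> nat \<Rightarrow> lcons set" where
  "PiSet D \<Pi> i = elimsteps D \<Pi> (D - i)"

definition epsv :: "nat \<Rightarrow> lcons \<Rightarrow> (nat \<Rightarrow> real) \<Rightarrow> real" where
  "epsv i \<phi> y = - (\<Sum>k\<in>{1..<i}. (wt \<phi> k / wt \<phi> i) * y k) - bias \<phi> / wt \<phi> i"

(* lb_i and ub_i (max {} = -inf, min {} = +inf) *)
definition lbnd :: "nat \<Rightarrow> lcons set \<Rightarrow> nat \<Rightarrow> (nat \<Rightarrow> real) \<Rightarrow> ereal" where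
  "lbnd D \<Pi> i y = Sup ((\<lambda>\<phi>. ereal (epsv i \<phi> y)) ` posset i (PiSet D \<Pi> i))"

definition ubnd :: "nat \<Rightarrow> lcons set \<Rightarrow> nat \<Rightarrow> (nat \<Rightarrow> real) \<Rightarrow> ereal" where
  "ubnd D \<Pi> i y = Inf ((\<lambda>\<phi>. ereal (epsv i \<phi> y)) ` negset i (PiSet D \<Pi> i))"

(* r is an admissible value of max^i(a, lb_i), given computed values y_1..y_{i-1} *)
definition maxi_ok :: "nat \<Rightarrow> lcons set \<Rightarrow> nat \<Rightarrow> (nat \<Rightarrow> real) \<Rightarrow> real \<Rightarrow> real \<Rightarrow> bool" where
  "maxi_ok D \<Pi> i y a r \<longleftrightarrow>
     (let lb = lbnd D \<Pi> i y; ub = ubnd D \<Pi> i y;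
          v = real_of_ereal (max (ereal a) lb) in
      if (\<exists>\<phi>\<in>posset i (PiSet D \<Pi> i). strict \<phi> \<and> v = epsv i \<phi> y)
      then (\<exists>e>0. lb + ereal e < ub \<and> r = v + e)
      else r = v)"

(* r is an admissible value of min^i(a, ub_i), given computed values y_1..y_{i-1} *)
definition mini_ok :: "nat \<Rightarrow> lcons set \<Rightarrow> nat \<Rightarrow> (nat \<Rightarrow> real) \<Rightarrow> real \<Rightarrow> real \<Rightarrow> bool" where
  "mini_ok D \<Pi> i y a r \<longleftrightarrow>
     (let lb = lbnd D \<Pi> i y; ub = ubnd D \<Pi> i y;
          u = real_of_ereal (min (ereal a) ub) in
      if (\<exists>\<phi>\<in>negset i (PiSet D \<Pi> i). strict \<phi> \<and> u = epsv i \<phi> y)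
      then (\<exists>e>0. ub - ereal e > lb \<and> r = u - e)
      else r = u)"

(* y is CL(xt) for some admissible choice of the epsilon values *)
definition is_CL :: "nat \<Rightarrow> lcons set \<Rightarrow> (nat \<Rightarrow> real) \<Rightarrow> (nat \<Rightarrow> real) \<Rightarrow> bool" where
  "is_CL D \<Pi> xt y \<longleftrightarrow>
     (\<forall>i\<in>{1..D}. \<exists>r. maxi_ok D \<Pi> i y (xt i) r \<and> mini_ok D \<Pi> i y r (y i))"

(* a generative model, viewed as a map from its source of randomness to samples,
   is compliant with Pi if all samples it generates satisfy Pi *)
definition compliant :: "nat \<Rightarrow> lcons set \<Rightarrow> ('w \<Rightarrow> (nat \<Rightarrow> real)) \<Rightarrow> bool" where
  "compliant D \<Pi> m \<longleftrightarrow> (\<forall>s\<in>range m. sat_set D s \<Pi>)"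

end

theory Submission imports Defs begin

text \<open>Fourier--Motzkin elimination is sound: a point satisfying \<open>\<Pi>\<^sub>i\<close> satisfies every
  reduction, hence \<open>\<Pi>\<^bsub>i-1\<^esub>\<close>; and \<open>\<Pi>\<^sub>0\<close> is variable-free, so it holds everywhere once \<open>\<Pi>\<close> is
  satisfiable. Conversely, if \<open>y\<^sub>1, \<dots>, y\<^bsub>i-1\<^esub>\<close> satisfy \<open>\<Pi>\<^bsub>i-1\<^esub>\<close>, then every lower bound
  \<open>\<epsilon>\<^sup>\<phi>\<^sub>i\<close> (\<open>\<phi> \<in> \<Pi>\<^sub>i\<^sup>+\<close>) lies below every upper bound \<open>\<epsilon>\<^sup>\<psi>\<^sub>i\<close> (\<open>\<psi> \<in> \<Pi>\<^sub>i\<^sup>-\<close>), strictly if \<open>\<phi>\<close> or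
  \<open>\<psi>\<close> is strict, because \<open>red\<^sub>i(\<psi>, \<phi>)\<close> evaluates to a positive multiple of their difference.
  Clamping \<open>x\<^sub>i\<close> into this interval and nudging it off a strict endpoint therefore gives a
  value \<open>y\<^sub>i\<close> satisfying \<open>\<Pi>\<^sub>i\<close>, and admissible \<open>\<epsilon>\<close> exist for the same reason. By induction on
  \<open>i\<close> the output satisfies \<open>\<Pi>\<^sub>D = \<Pi>\<close>.\<close>

lemma PiSet_wt_zero:
  assumes "\<phi> \<in> PiSet D \<Pi> m" "m < k" "k \<le> D"
  shows "wt \<phi> k = 0"
proof -
  have "wt \<phi> k = 0" if "\<phi> \<in> elimsteps D \<Pi> n" "D - n < k" "k \<le> D" for n \<phi>
    using that
  proof (induction n arbitrary: \<phi>)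
    case 0
    then show ?case by simp
  next
    case (Suc n)
    let ?G = "elimsteps D \<Pi> n"
    from Suc.prems(1) have "\<phi> \<in> elim (D - n) ?G" by simp
    then consider "\<phi> \<in> ?G" "wt \<phi> (D - n) = 0"
      | \<phi>1 \<phi>2 where "\<phi> = red (D - n) \<phi>1 \<phi>2" "\<phi>1 \<in> ?G" "\<phi>2 \<in> ?G"
      unfolding elim_def negset_def posset_def by (auto simp: not_less_iff_gr_or_eq)
    then show ?case
      using Suc by cases (cases "k = D - n"; auto simp: red_def)+
  qed
  then show ?thesis using assms unfolding PiSet_def by auto
qed

lemma lval_PiSet_cong:
  assumes "\<phi> \<in> PiSet D \<Pi> m" "\<And>k. 1 \<le> k \<Longrightarrow> k \<le> m \<Longrightarrow> y k = y' k"
  shows "lval D \<phi> y = lval D \<phi> y'"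
proof -
  have "(\<Sum>k=1..D. wt \<phi> k * y k) = (\<Sum>k=1..D. wt \<phi> k * y' k)"
  proof (rule sum.cong)
    fix k assume "k \<in> {1..D}"
    then show "wt \<phi> k * y k = wt \<phi> k * y' k"
      using assms PiSet_wt_zero[OF assms(1), of k] by (cases "k \<le> m") auto
  qed simp
  then show ?thesis unfolding lval_def by simp
qed

lemma lval_PiSet_eq_epsv:
  assumes "1 \<le> i" "i \<le> D" "\<phi> \<in> PiSet D \<Pi> i" "wt \<phi> i \<noteq> 0"
  shows "lval D \<phi> y = wt \<phi> i * (y i - epsv i \<phi> y)"
proof -
  have split: "{1..i} = insert i {1..<i}" using assms(1) by auto
  have "(\<Sum>k=1..D. wt \<phi> k * y k) = (\<Sum>k=1..i. wt \<phi> k * y k)"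
    by (rule sum.mono_neutral_right) (use assms PiSet_wt_zero[OF assms(3)] in auto)
  also have "\<dots> = wt \<phi> i * y i + wt \<phi> i * (\<Sum>k\<in>{1..<i}. wt \<phi> k / wt \<phi> i * y k)"
    unfolding split using assms(4) by (simp add: sum_distrib_left)
  finally show ?thesis using assms(4) unfolding lval_def epsv_def by (simp add: algebra_simps)
qed

lemma lval_red:
  assumes "wt \<phi>1 j < 0" "wt \<phi>2 j > 0"
  shows "lval D (red j \<phi>1 \<phi>2) y = \<bar>wt \<phi>2 j\<bar> * lval D \<phi>1 y + \<bar>wt \<phi>1 j\<bar> * lval D \<phi>2 y"
proof -
  have "wt (red j \<phi>1 \<phi>2) k = wt \<phi>1 k * \<bar>wt \<phi>2 j\<bar> + wt \<phi>2 k * \<bar>wt \<phi>1 j\<bar>" for k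
    using assms by (auto simp: red_def)
  then show ?thesis unfolding lval_def
    by (simp add: algebra_simps sum.distrib sum_distrib_left red_def)
qed

lemma sat_iff_lval: "sat D y \<phi> \<longleftrightarrow> lval D \<phi> y \<ge> 0 \<and> (strict \<phi> \<longrightarrow> lval D \<phi> y > 0)"
  by (auto simp: sat_def)

lemma sat_red:
  assumes "wt \<phi>1 j < 0" "wt \<phi>2 j > 0" "sat D y \<phi>1" "sat D y \<phi>2"
  shows "sat D y (red j \<phi>1 \<phi>2)"
proof -
  have "\<bar>wt \<phi>1 j\<bar> > 0" "\<bar>wt \<phi>2 j\<bar> > 0" using assms(1,2) by auto
  with assms(3,4) show ?thesis
    unfolding sat_iff_lval lval_red[OF assms(1,2)]
    by (auto simp: red_def simp del: zero_less_abs_iff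
        intro: add_nonneg_nonneg add_pos_nonneg add_nonneg_pos mult_nonneg_nonneg mult_pos_pos)
qed

lemma sat_set_elim: "sat_set D x \<Gamma> \<Longrightarrow> sat_set D x (elim j \<Gamma>)"
  unfolding sat_set_def elim_def by (auto simp: negset_def posset_def intro: sat_red)

lemma finite_elim: "finite \<Gamma> \<Longrightarrow> finite (elim j \<Gamma>)"
proof -
  assume "finite \<Gamma>"
  moreover have "{red j \<phi>1 \<phi>2 | \<phi>1 \<phi>2. \<phi>1 \<in> negset j \<Gamma> \<and> \<phi>2 \<in> posset j \<Gamma>}
      \<subseteq> case_prod (red j) ` (\<Gamma> \<times> \<Gamma>)"
    by (auto simp: negset_def posset_def)
  moreover have "finite (case_prod (red j) ` (\<Gamma> \<times> \<Gamma>))" using \<open>finite \<Gamma>\<close> by simp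
  ultimately show ?thesis unfolding elim_def by (meson finite_Diff finite_UnI finite_subset)
qed

lemma finite_PiSet: "finite \<Pi> \<Longrightarrow> finite (PiSet D \<Pi> m)"
proof -
  assume "finite \<Pi>"
  then have "finite (elimsteps D \<Pi> n)" for n by (induction n) (auto intro: finite_elim)
  then show ?thesis by (simp add: PiSet_def)
qed

lemma PiSet_top [simp]: "PiSet D \<Pi> D = \<Pi>"
  by (simp add: PiSet_def)

lemma PiSet_pred: "1 \<le> i \<Longrightarrow> i \<le> D \<Longrightarrow> PiSet D \<Pi> (i - 1) = elim i (PiSet D \<Pi> i)"
proof -
  assume "1 \<le> i" "i \<le> D"
  then have "D - (i - 1) = Suc (D - i)" "D - (D - i) = i" by arith+
  then show ?thesis by (simp add: PiSet_def)
qed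

lemma satisfiable_imp_sat_set_PiSet_0:
  assumes "satisfiable D \<Pi>"
  shows "sat_set D y (PiSet D \<Pi> 0)"
proof -
  obtain x where x: "sat_set D x \<Pi>" using assms by (auto simp: satisfiable_def)
  then have "sat_set D x (elimsteps D \<Pi> n)" for n by (induction n) (auto intro: sat_set_elim)
  then have "sat_set D x (PiSet D \<Pi> 0)" by (simp add: PiSet_def)
  moreover have "lval D \<phi> y = lval D \<phi> x" if "\<phi> \<in> PiSet D \<Pi> 0" for \<phi>
    using lval_PiSet_cong[OF that] by auto
  ultimately show ?thesis by (simp add: sat_set_def sat_def)
qed

lemma epsv_cong: "(\<And>k. k < i \<Longrightarrow> y k = y' k) \<Longrightarrow> epsv i \<phi> y = epsv i \<phi> y'"
  unfolding epsv_def by (intro arg_cong2[where f = "(-)"] arg_cong[where f = uminus] sum.cong) auto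

definition lb_of :: "'a set \<Rightarrow> ('a \<Rightarrow> real) \<Rightarrow> ereal" where
  "lb_of P f = (SUP \<phi>\<in>P. ereal (f \<phi>))"

definition ub_of :: "'a set \<Rightarrow> ('a \<Rightarrow> real) \<Rightarrow> ereal" where
  "ub_of N f = (INF \<psi>\<in>N. ereal (f \<psi>))"

text \<open>\<open>max\<^sup>i\<close> and \<open>min\<^sup>i\<close> abstracted to lower bounds \<open>f ` P\<close>, upper bounds \<open>f ` N\<close> and
  strictness marker \<open>s\<close>.\<close>

definition max_eps_ok :: "'a set \<Rightarrow> 'a set \<Rightarrow> ('a \<Rightarrow> real) \<Rightarrow> ('a \<Rightarrow> bool) \<Rightarrow> real \<Rightarrow> real \<Rightarrow> bool" where
  "max_eps_ok P N f s a r \<longleftrightarrow>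
     (let lb = lb_of P f; ub = ub_of N f; v = real_of_ereal (max (ereal a) lb) in
      if \<exists>\<phi>\<in>P. s \<phi> \<and> v = f \<phi> then \<exists>e>0. lb + ereal e < ub \<and> r = v + e else r = v)"

definition min_eps_ok :: "'a set \<Rightarrow> 'a set \<Rightarrow> ('a \<Rightarrow> real) \<Rightarrow> ('a \<Rightarrow> bool) \<Rightarrow> real \<Rightarrow> real \<Rightarrow> bool" where
  "min_eps_ok P N f s a r \<longleftrightarrow>
     (let lb = lb_of P f; ub = ub_of N f; u = real_of_ereal (min (ereal a) ub) in
      if \<exists>\<psi>\<in>N. s \<psi> \<and> u = f \<psi> then \<exists>e>0. lb < ub - ereal e \<and> r = u - e else r = u)"

lemma maxi_ok_eq_max_eps_ok:
  "maxi_ok D \<Pi> i y =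
     max_eps_ok (posset i (PiSet D \<Pi> i)) (negset i (PiSet D \<Pi> i)) (\<lambda>\<phi>. epsv i \<phi> y) strict"
  by (simp add: fun_eq_iff maxi_ok_def max_eps_ok_def lbnd_def ubnd_def lb_of_def ub_of_def)

lemma mini_ok_eq_min_eps_ok:
  "mini_ok D \<Pi> i y =
     min_eps_ok (posset i (PiSet D \<Pi> i)) (negset i (PiSet D \<Pi> i)) (\<lambda>\<phi>. epsv i \<phi> y) strict"
  by (simp add: fun_eq_iff mini_ok_def min_eps_ok_def lbnd_def ubnd_def lb_of_def ub_of_def)

lemma ereal_add_gap:
  assumes "ereal x < u"
  shows "\<exists>e>0. ereal x + ereal e < u"
proof (cases u)
  case (real r)
  with assms show ?thesis by (intro exI[of _ "(r - x) / 2"]) (auto simp: field_simps)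
qed (use assms in \<open>auto intro: exI[of _ 1]\<close>)

lemma ereal_diff_gap:
  assumes "l < ereal x"
  shows "\<exists>e>0. l < ereal x - ereal e"
proof (cases l)
  case (real r)
  with assms show ?thesis by (intro exI[of _ "(x - r) / 2"]) (auto simp: field_simps)
qed (use assms in \<open>auto intro: exI[of _ 1]\<close>)

locale separated_bounds =
  fixes P N :: "'a set" and f :: "'a \<Rightarrow> real" and s :: "'a \<Rightarrow> bool"
  assumes finite_P: "finite P" and finite_N: "finite N"
    and separated: "\<And>\<phi> \<psi>. \<phi> \<in> P \<Longrightarrow> \<psi> \<in> N \<Longrightarrow> f \<phi> \<le> f \<psi> \<and> (s \<phi> \<or> s \<psi> \<longrightarrow> f \<phi> < f \<psi>)"
begin

abbreviation "lb \<equiv> lb_of P f"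
abbreviation "ub \<equiv> ub_of N f"

lemma lb_upper: "\<phi> \<in> P \<Longrightarrow> ereal (f \<phi>) \<le> lb"
  unfolding lb_of_def by (rule SUP_upper)

lemma ub_lower: "\<psi> \<in> N \<Longrightarrow> ub \<le> ereal (f \<psi>)"
  unfolding ub_of_def by (rule INF_lower)

lemma lb_cases: "P = {} \<and> lb = -\<infinity> \<or> (\<exists>\<phi>\<in>P. lb = ereal (f \<phi>))"
proof (cases "P = {}")
  case False
  then have "lb \<in> (\<lambda>\<phi>. ereal (f \<phi>)) ` P"
    unfolding lb_of_def using finite_P by (simp add: cSup_eq_Max)
  then show ?thesis by auto
qed (simp add: lb_of_def bot_ereal_def)

lemma ub_cases: "N = {} \<and> ub = \<infinity> \<or> (\<exists>\<psi>\<in>N. ub = ereal (f \<psi>))"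
proof (cases "N = {}")
  case False
  then have "ub \<in> (\<lambda>\<psi>. ereal (f \<psi>)) ` N"
    unfolding ub_of_def using finite_N by (simp add: cInf_eq_Min)
  then show ?thesis by auto
qed (simp add: ub_of_def top_ereal_def)

lemma strict_lower_lt_ub: "\<phi> \<in> P \<Longrightarrow> s \<phi> \<Longrightarrow> ereal (f \<phi>) < ub"
  using ub_cases separated by auto

lemma lb_lt_strict_upper: "\<psi> \<in> N \<Longrightarrow> s \<psi> \<Longrightarrow> lb < ereal (f \<psi>)"
  using lb_cases separated by auto

lemma ereal_max_lb: "ereal (real_of_ereal (max (ereal a) lb)) = max (ereal a) lb"
  using lb_cases by (cases lb) (auto simp: max_def)

lemma ereal_min_ub: "ereal (real_of_ereal (min (ereal a) ub)) = min (ereal a) ub"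
  using ub_cases by (cases ub) (auto simp: min_def)

lemma lb_eq_if_max_hits:
  assumes "\<phi> \<in> P" "real_of_ereal (max (ereal a) lb) = f \<phi>"
  shows "lb = ereal (f \<phi>)"
  using lb_upper[OF assms(1)] ereal_max_lb[of a] assms(2) by (metis antisym max.cobounded2)

lemma ub_eq_if_min_hits:
  assumes "\<psi> \<in> N" "real_of_ereal (min (ereal a) ub) = f \<psi>"
  shows "ub = ereal (f \<psi>)"
  using ub_lower[OF assms(1)] ereal_min_ub[of a] assms(2) by (metis antisym min.cobounded2)

lemma max_eps_ok_exists: "\<exists>r. max_eps_ok P N f s a r"
proof -
  define v where "v = real_of_ereal (max (ereal a) lb)"
  show ?thesis
  proof (cases "\<exists>\<phi>\<in>P. s \<phi> \<and> v = f \<phi>")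
    case True
    then obtain \<phi> where "\<phi> \<in> P" "s \<phi>" "v = f \<phi>" by blast
    moreover from this have "lb = ereal v" using lb_eq_if_max_hits unfolding v_def by simp
    ultimately obtain e where "e > 0" "lb + ereal e < ub"
      using ereal_add_gap[OF strict_lower_lt_ub] by metis
    with True show ?thesis
      unfolding max_eps_ok_def Let_def v_def[symmetric] by (intro exI[of _ "v + e"]) auto
  qed (auto simp: max_eps_ok_def Let_def v_def)
qed

lemma min_eps_ok_exists: "\<exists>t. min_eps_ok P N f s r t"
proof -
  define u where "u = real_of_ereal (min (ereal r) ub)"
  show ?thesis
  proof (cases "\<exists>\<psi>\<in>N. s \<psi> \<and> u = f \<psi>")
    case True
    then obtain \<psi> where "\<psi> \<in> N" "s \<psi>" "u = f \<psi>" by blast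
    moreover from this have "ub = ereal u" using ub_eq_if_min_hits unfolding u_def by simp
    ultimately obtain e where "e > 0" "lb < ub - ereal e"
      using ereal_diff_gap[OF lb_lt_strict_upper] by metis
    with True show ?thesis
      unfolding min_eps_ok_def Let_def u_def[symmetric] by (intro exI[of _ "u - e"]) auto
  qed (auto simp: min_eps_ok_def Let_def u_def)
qed

lemma max_eps_ok_above_lower:
  assumes "max_eps_ok P N f s a r" "\<phi> \<in> P"
  shows "f \<phi> \<le> r \<and> (s \<phi> \<longrightarrow> f \<phi> < r)"
proof -
  define v where "v = real_of_ereal (max (ereal a) lb)"
  have "ereal (f \<phi>) \<le> ereal v"
    using lb_upper[OF assms(2)] ereal_max_lb[of a] unfolding v_def by (metis max.coboundedI2)
  then show ?thesis
    using assms unfolding max_eps_ok_def Let_def v_def[symmetric]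
    by (auto split: if_splits)
qed

lemma min_eps_ok_below_upper:
  assumes "min_eps_ok P N f s r t" "\<psi> \<in> N"
  shows "t \<le> f \<psi> \<and> (s \<psi> \<longrightarrow> t < f \<psi>)"
proof -
  define u where "u = real_of_ereal (min (ereal r) ub)"
  have "ereal u \<le> ereal (f \<psi>)"
    using ub_lower[OF assms(2)] ereal_min_ub[of r] unfolding u_def by (metis min.coboundedI2)
  then show ?thesis
    using assms unfolding min_eps_ok_def Let_def u_def[symmetric]
    by (auto split: if_splits)
qed

lemma min_eps_ok_above_lower:
  assumes max: "max_eps_ok P N f s a r" and min: "min_eps_ok P N f s r t" and "\<phi> \<in> P"
  shows "f \<phi> \<le> t \<and> (s \<phi> \<longrightarrow> f \<phi> < t)"
proof -
  define u where "u = real_of_ereal (min (ereal r) ub)"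
  have u: "ereal u = min (ereal r) ub" unfolding u_def by (rule ereal_min_ub)
  show ?thesis
  proof (cases "\<exists>\<psi>\<in>N. s \<psi> \<and> u = f \<psi>")
    case True
    then obtain \<psi> where "\<psi> \<in> N" "u = f \<psi>" by auto
    then have "ub = ereal u" using ub_eq_if_min_hits u_def by simp
    moreover obtain e where "lb < ub - ereal e" "t = u - e"
      using min True unfolding min_eps_ok_def Let_def u_def[symmetric] by auto
    ultimately have "lb < ereal t" by simp
    with lb_upper[OF \<open>\<phi> \<in> P\<close>] have "ereal (f \<phi>) < ereal t" by (rule order.strict_trans1)
    then show ?thesis by simp
  next
    case False
    then have "t = u" using min unfolding min_eps_ok_def Let_def u_def[symmetric] by auto
    show ?thesis
    proof (cases "ereal r \<le> ub")
      case True
      then show ?thesis using u \<open>t = u\<close> max_eps_ok_above_lower[OF max \<open>\<phi> \<in> P\<close>] by simp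
    next
      case False
      \<comment> \<open>then \<open>t\<close> is the least upper bound, which dominates every lower bound\<close>
      then obtain \<psi> where "\<psi> \<in> N" "ub = ereal (f \<psi>)" using ub_cases by auto
      with False u \<open>t = u\<close> show ?thesis using separated[OF \<open>\<phi> \<in> P\<close>] by simp
    qed
  qed
qed

end

lemma epsv_separated:
  assumes i: "1 \<le> i" "i \<le> D" and sat: "sat_set D y (PiSet D \<Pi> (i - 1))"
    and \<phi>: "\<phi> \<in> posset i (PiSet D \<Pi> i)" and \<psi>: "\<psi> \<in> negset i (PiSet D \<Pi> i)"
  shows "epsv i \<phi> y \<le> epsv i \<psi> y \<and> (strict \<phi> \<or> strict \<psi> \<longrightarrow> epsv i \<phi> y < epsv i \<psi> y)"
proof -
  have w: "wt \<phi> i > 0" "wt \<psi> i < 0" "\<phi> \<in> PiSet D \<Pi> i" "\<psi> \<in> PiSet D \<Pi> i"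
    using \<phi> \<psi> by (auto simp: posset_def negset_def)
  define c where "c = wt \<phi> i * - wt \<psi> i"
  have "red i \<psi> \<phi> \<in> PiSet D \<Pi> (i - 1)"
    unfolding PiSet_pred[OF i] elim_def using \<phi> \<psi> by blast
  then have "sat D y (red i \<psi> \<phi>)" using sat by (simp add: sat_set_def)
  moreover have "lval D (red i \<psi> \<phi>) y = c * (epsv i \<psi> y - epsv i \<phi> y)"
  proof -
    have l: "lval D \<phi> y = wt \<phi> i * (y i - epsv i \<phi> y)" "lval D \<psi> y = wt \<psi> i * (y i - epsv i \<psi> y)"
      using w lval_PiSet_eq_epsv[OF i] by auto
    show ?thesis unfolding lval_red[OF w(2,1)] l c_def using w by (simp add: algebra_simps)
  qed
  moreover have "c > 0" unfolding c_def using w by (simp add: mult_pos_neg)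
  moreover have "strict (red i \<psi> \<phi>) \<longleftrightarrow> strict \<psi> \<or> strict \<phi>" by (simp add: red_def)
  ultimately show ?thesis
    unfolding sat_iff_lval by (auto simp: zero_le_mult_iff zero_less_mult_iff)
qed

lemma separated_bounds_PiSet:
  assumes "finite \<Pi>" "1 \<le> i" "i \<le> D" "sat_set D y (PiSet D \<Pi> (i - 1))"
  shows "separated_bounds (posset i (PiSet D \<Pi> i)) (negset i (PiSet D \<Pi> i)) (\<lambda>\<phi>. epsv i \<phi> y) strict"
  using assms finite_PiSet epsv_separated by unfold_locales (auto simp: posset_def negset_def)

lemma sat_set_PiSet_step:
  assumes "finite \<Pi>" and i: "1 \<le> i" "i \<le> D" and sat: "sat_set D y (PiSet D \<Pi> (i - 1))"
    and ok: "maxi_ok D \<Pi> i y a r" "mini_ok D \<Pi> i y r (y i)"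
  shows "sat_set D y (PiSet D \<Pi> i)"
  unfolding sat_set_def
proof
  interpret separated_bounds "posset i (PiSet D \<Pi> i)" "negset i (PiSet D \<Pi> i)" "\<lambda>\<phi>. epsv i \<phi> y" strict
    using separated_bounds_PiSet assms by blast
  note ok' = ok[unfolded maxi_ok_eq_max_eps_ok mini_ok_eq_min_eps_ok]
  fix \<phi> assume \<phi>: "\<phi> \<in> PiSet D \<Pi> i"
  consider "wt \<phi> i = 0" | "wt \<phi> i > 0" | "wt \<phi> i < 0" by linarith
  then show "sat D y \<phi>"
  proof cases
    case 1
    then have "\<phi> \<in> PiSet D \<Pi> (i - 1)"
      unfolding PiSet_pred[OF i] elim_def using \<phi> by (auto simp: posset_def negset_def)
    then show ?thesis using sat by (simp add: sat_set_def)
  next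
    case 2
    then have "\<phi> \<in> posset i (PiSet D \<Pi> i)" using \<phi> by (simp add: posset_def)
    from min_eps_ok_above_lower[OF ok' this] show ?thesis
      unfolding sat_iff_lval using lval_PiSet_eq_epsv[OF i \<phi>, of y] 2 by simp
  next
    case 3
    then have "\<phi> \<in> negset i (PiSet D \<Pi> i)" using \<phi> by (simp add: negset_def)
    from min_eps_ok_below_upper[OF ok'(2) this] show ?thesis
      unfolding sat_iff_lval using lval_PiSet_eq_epsv[OF i \<phi>, of y] 3
      by (auto simp: zero_le_mult_iff zero_less_mult_iff)
  qed
qed

definition CL_upto :: "nat \<Rightarrow> lcons set \<Rightarrow> (nat \<Rightarrow> real) \<Rightarrow> (nat \<Rightarrow> real) \<Rightarrow> nat \<Rightarrow> bool" where
  "CL_upto D \<Pi> xt y m \<longleftrightarrow>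
     (\<forall>i\<in>{1..m}. \<exists>r. maxi_ok D \<Pi> i y (xt i) r \<and> mini_ok D \<Pi> i y r (y i))"

lemma is_CL_eq_CL_upto: "is_CL D \<Pi> xt y = CL_upto D \<Pi> xt y D"
  by (simp add: is_CL_def CL_upto_def)

lemma maxi_mini_ok_cong:
  assumes "\<And>k. k < i \<Longrightarrow> y k = y' k"
  shows "maxi_ok D \<Pi> i y = maxi_ok D \<Pi> i y'" "mini_ok D \<Pi> i y = mini_ok D \<Pi> i y'"
  using epsv_cong[OF assms]
  by (simp_all add: maxi_ok_eq_max_eps_ok mini_ok_eq_min_eps_ok)

lemma CL_upto_fun_upd: "CL_upto D \<Pi> xt y m \<Longrightarrow> m < i \<Longrightarrow> CL_upto D \<Pi> xt (y(i := t)) m"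
  unfolding CL_upto_def using maxi_mini_ok_cong[of _ y "y(i := t)"] by auto

lemma CL_upto_sat_set_PiSet:
  assumes "finite \<Pi>" "satisfiable D \<Pi>" "CL_upto D \<Pi> xt y m" "m \<le> D"
  shows "sat_set D y (PiSet D \<Pi> m)"
  using assms(3,4)
proof (induction m)
  case 0
  show ?case using satisfiable_imp_sat_set_PiSet_0[OF assms(2)] .
next
  case (Suc m)
  then have "CL_upto D \<Pi> xt y m" by (simp add: CL_upto_def)
  moreover have "Suc m \<in> {1..Suc m}" by simp
  with Suc.prems(1) obtain r
    where "maxi_ok D \<Pi> (Suc m) y (xt (Suc m)) r" "mini_ok D \<Pi> (Suc m) y r (y (Suc m))"
    unfolding CL_upto_def by blast
  ultimately show ?case using sat_set_PiSet_step[OF assms(1), of "Suc m"] Suc by simp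
qed

lemma CL_upto_exists:
  assumes "finite \<Pi>" "satisfiable D \<Pi>" "m \<le> D"
  shows "\<exists>y. CL_upto D \<Pi> xt y m"
  using assms(3)
proof (induction m)
  case 0
  show ?case by (simp add: CL_upto_def)
next
  case (Suc m)
  then obtain y where y: "CL_upto D \<Pi> xt y m" by auto
  have i: "1 \<le> Suc m" "Suc m \<le> D" using Suc.prems by auto
  interpret separated_bounds "posset (Suc m) (PiSet D \<Pi> (Suc m))" "negset (Suc m) (PiSet D \<Pi> (Suc m))"
      "\<lambda>\<phi>. epsv (Suc m) \<phi> y" strict
    using separated_bounds_PiSet[OF assms(1) i] CL_upto_sat_set_PiSet[OF assms(1,2) y] Suc.prems by simp
  obtain r t where "maxi_ok D \<Pi> (Suc m) y (xt (Suc m)) r" "mini_ok D \<Pi> (Suc m) y r t"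
    using max_eps_ok_exists min_eps_ok_exists
    unfolding maxi_ok_eq_max_eps_ok mini_ok_eq_min_eps_ok by blast
  then have "CL_upto D \<Pi> xt (y(Suc m := t)) (Suc m)"
    using CL_upto_fun_upd[OF y, of "Suc m" t] maxi_mini_ok_cong[of "Suc m" y "y(Suc m := t)"]
    by (auto simp: CL_upto_def le_Suc_eq)
  then show ?case by blast
qed

theorem theorem1:
  fixes D :: nat and \<Pi> :: "lcons set"
  assumes "finite \<Pi>" and "satisfiable D \<Pi>"
  shows "(\<forall>xt. (\<exists>y. is_CL D \<Pi> xt y) \<and> (\<forall>y. is_CL D \<Pi> xt y \<longrightarrow> sat_set D y \<Pi>))
       \<and> (\<forall>(m :: 'w \<Rightarrow> (nat \<Rightarrow> real)) cl. (\<forall>xt. is_CL D \<Pi> xt (cl xt))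
              \<longrightarrow> compliant D \<Pi> (cl \<circ> m))"
proof -
  have "sat_set D y \<Pi>" if "is_CL D \<Pi> xt y" for xt y
    using CL_upto_sat_set_PiSet[OF assms, of xt y D] that by (simp add: is_CL_eq_CL_upto)
  moreover have "\<exists>y. is_CL D \<Pi> xt y" for xt
    using CL_upto_exists[OF assms, of D xt] by (simp add: is_CL_eq_CL_upto)
  ultimately show ?thesis unfolding compliant_def by auto
qed

end
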